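(* In the setting described in the context, the Dirichlet problem has at most one regular solution: if $u_1,u_2$ are functions that are regular solutions of $\sum_{i=1}^m u_{x_ix_i}+\sum_{k=1}^n\frac{2\alpha_k}{x_k}u_{x_k}=0$ in $\Omega$, continuous on $\overline\Omega$, and both satisfy $u|_\Gamma=\varphi$ on $\overline\Gamma$ and $u|_{x_k=0}=\tau_k(\tilde x_k)$ on $\overline\Gamma_k$ for all $k\in K$, then $u_1=u_2$ on $\overline\Omega$.
   Context: Let $m>2$ and $1\le n\le m$ be integers, $K=\{1,\dots,n\}$, $\alpha=(\alpha_1,\dots,\alpha_n)$ real with $0<2\alpha_k<1$, $\mathbb R_m^{n+}=\{x\in\mathbb R^m:x_1>0,\dots,x_n>0\}$. A regular solution of the equation in a domain is a function with continuous derivatives up to second order there satisfying the equation at every point. $\Gamma$ is a surface in $\mathbb R_m^{n+}$ which together with the hyperplanes $x_1=0,\dots,x_n=0$ bounds a finite domain $\Omega\subset\mathbb R_m^{n+}$; $\Gamma_k$ is the part of $\partial\Omega$ on the hyperplane $x_k=0$. $\Gamma$ is a Lyapunov surface: (i) definite normal at every point; (ii) constants $a,\kappa>0$ with angle between normals at $x,\xi\in\Gamma$ at most $a|x-\xi|^\kappa$; (iii) $\Gamma$ meets the hyperplanes $x_k=0$ at right angles. For $x\in\mathbb R^m$, $\tilde x_k=(x_1,\dots,x_{k-1},x_{k+1},\dots,x_m)$. The data $\varphi\in C(\overline\Gamma)$ and $\tau_k\in C(\overline\Gamma_k)$ are given continuous functions satisfying the matching conditions $\varphi=\tau_k$ on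 $\overline\Gamma\cap\overline\Gamma_k$, $k\in K$. *)

theory Defs
  imports "HOL-Analysis.Analysis"
begin

text \<open>Points of R^m are vectors of type real^'m; the index set K of the
  distinguished coordinates x_1..x_n is a subset of the coordinate type.\<close>

definition unit_vec :: "'m::finite \<Rightarrow> real^'m" where
  "unit_vec i = axis i 1"

definition pd :: "'m::finite \<Rightarrow> (real^'m \<Rightarrow> real) \<Rightarrow> real^'m \<Rightarrow> real" where
  "pd i u x = deriv (\<lambda>t. u (x + t *\<^sub>R unit_vec i)) 0"

definition has_pd :: "'m::finite \<Rightarrow> (real^'m \<Rightarrow> real) \<Rightarrow> real^'m \<Rightarrow> bool" where
  "has_pd i u x \<longleftrightarrow> (\<lambda>t. u (x + t *\<^sub>R unit_vec i)) field_differentiable (at 0)"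

definition C2_on :: "(real^'m::finite \<Rightarrow> real) \<Rightarrow> (real^'m) set \<Rightarrow> bool" where
  "C2_on u S \<longleftrightarrow>
     continuous_on S u \<and>
     (\<forall>i. \<forall>x\<in>S. has_pd i u x) \<and>
     (\<forall>i j. \<forall>x\<in>S. has_pd j (pd i u) x) \<and>
     (\<forall>i. continuous_on S (pd i u)) \<and>
     (\<forall>i j. continuous_on S (pd j (pd i u)))"

definition orthant :: "'m::finite set \<Rightarrow> (real^'m) set" where
  "orthant K = {x. \<forall>k\<in>K. x $ k > 0}"

definition regular_solution ::
  "'m::finite set \<Rightarrow> ('m \<Rightarrow> real) \<Rightarrow> (real^'m) set \<Rightarrow> (real^'m \<Rightarrow> real) \<Rightarrow> bool" where
  "regular_solution K \<alpha> \<Omega> u \<longleftrightarrow>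
     C2_on u \<Omega> \<and>
     (\<forall>x\<in>\<Omega>. (\<Sum>i\<in>UNIV. pd i (pd i u) x) + (\<Sum>k\<in>K. (2 * \<alpha> k / x $ k) * pd k u x) = 0)"

text \<open>Lyapunov surface conditions (i)-(iii) for \<Gamma>, with the unit normal field \<nu>
  given on the closure of \<Gamma>.  (i) \<nu> x is a unit vector normal to the tangent
  hyperplane of \<Gamma> at x; (ii) the angle between normals is Hoelder; (iii) at points
  of the closure on x_k = 0 the normal is orthogonal to e_k (right angle).\<close>
definition lyapunov_surface :: "'m::finite set \<Rightarrow> (real^'m) set \<Rightarrow> bool" where
  "lyapunov_surface K \<Gamma> \<longleftrightarrow>
     (\<exists>\<nu> :: real^'m \<Rightarrow> real^'m. \<exists>a \<kappa> :: real. a > 0 \<and> \<kappa> > 0 \<and>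
        (\<forall>x\<in>closure \<Gamma>. norm (\<nu> x) = 1 \<and>
           (\<forall>\<epsilon>>0. \<exists>\<delta>>0. \<forall>y\<in>closure \<Gamma>. dist y x < \<delta> \<longrightarrow>
               \<bar>\<nu> x \<bullet> (y - x)\<bar> \<le> \<epsilon> * dist y x)) \<and>
        (\<forall>x\<in>closure \<Gamma>. \<forall>\<xi>\<in>closure \<Gamma>. arccos (\<nu> x \<bullet> \<nu> \<xi>) \<le> a * dist x \<xi> powr \<kappa>) \<and>
        (\<forall>k\<in>K. \<forall>x\<in>closure \<Gamma>. x $ k = 0 \<longrightarrow> \<nu> x $ k = 0))"

end

theory Submission
  imports Defs
begin

(* The difference w = u1 - u2 is again a regular solution, and it vanishes on the whole
   boundary, which consists of the closure of \<Gamma> and the pieces \<Gamma>_k where both solutions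
   carry the same data. A weak maximum principle gives w \<le> 0, and symmetrically w \<ge> 0.
   For the maximum principle perturb w to v = w + \<epsilon> x_j^2. At an interior maximum of v all
   first derivatives vanish, so the singular coefficients 2\<alpha>_k/x_k drop out and the operator
   applied to v is \<le> 0 there; but it equals 2\<epsilon>(1 + 2\<alpha>_j) > 0 (with \<alpha>_j read as 0 for
   j \<notin> K). So v is maximal on the boundary, and \<epsilon> \<rightarrow> 0 gives w \<le> 0.
   Only \<alpha>_k \<ge> 0 is used: the Lyapunov condition, the bound 2\<alpha>_k < 1, connectedness and
   m > 2 matter for existence, not for uniqueness. *)

definition laplace_bessel ::
  "'m::finite set \<Rightarrow> ('m \<Rightarrow> real) \<Rightarrow> (real^'m \<Rightarrow> real) \<Rightarrow> real^'m \<Rightarrow> real" where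
  "laplace_bessel K \<alpha> u x =
     (\<Sum>i\<in>UNIV. pd i (pd i u) x) + (\<Sum>k\<in>K. (2 * \<alpha> k / x $ k) * pd k u x)"

lemma regular_solution_iff:
  "regular_solution K \<alpha> \<Omega> u \<longleftrightarrow> C2_on u \<Omega> \<and> (\<forall>x\<in>\<Omega>. laplace_bessel K \<alpha> u x = 0)"
  by (simp add: regular_solution_def laplace_bessel_def)

lemma unit_vec_nth: "unit_vec i $ j = (if j = i then 1 else 0)"
  by (simp add: unit_vec_def axis_def)

lemma has_real_derivative_pd:
  assumes "has_pd i u x"
  shows "((\<lambda>t. u (x + t *\<^sub>R unit_vec i)) has_real_derivative pd i u x) (at 0)"
  using assms unfolding has_pd_def pd_def by (simp add: DERIV_deriv_iff_field_differentiable)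

lemma has_pd_pdI:
  assumes "((\<lambda>t. u (x + t *\<^sub>R unit_vec i)) has_real_derivative D) (at 0)"
  shows "has_pd i u x" and "pd i u x = D"
  using assms by (auto simp: has_pd_def pd_def field_differentiable_def DERIV_imp_deriv)

lemma has_real_derivative_pd_shift:
  assumes "has_pd i u (x + s *\<^sub>R unit_vec i)"
  shows "((\<lambda>t. u (x + t *\<^sub>R unit_vec i)) has_real_derivative pd i u (x + s *\<^sub>R unit_vec i)) (at s)"
proof -
  have "((\<lambda>t. u (x + (t + s) *\<^sub>R unit_vec i)) has_real_derivative pd i u (x + s *\<^sub>R unit_vec i)) (at 0)"
    using has_real_derivative_pd[OF assms] by (simp add: scaleR_add_left algebra_simps)
  then show ?thesis
    using DERIV_shift[of "\<lambda>t. u (x + t *\<^sub>R unit_vec i)" _ 0 s] by simp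
qed

lemma eventually_line_in_open:
  assumes "open S" "x \<in> S"
  shows "eventually (\<lambda>t. x + t *\<^sub>R unit_vec i \<in> S) (nhds 0)"
proof -
  have "((\<lambda>t::real. x + t *\<^sub>R unit_vec i) \<longlongrightarrow> x) (nhds 0)"
    by (rule tendsto_eq_intros filterlim_ident | simp)+
  with assms show ?thesis
    by (auto simp: tendsto_def)
qed

lemma
  assumes "open S" "x \<in> S" "\<And>y. y \<in> S \<Longrightarrow> f y = g y"
  shows has_pd_cong: "has_pd i f x \<longleftrightarrow> has_pd i g x"
    and pd_cong: "pd i f x = pd i g x"
proof -
  have ev: "eventually (\<lambda>t. f (x + t *\<^sub>R unit_vec i) = g (x + t *\<^sub>R unit_vec i)) (nhds 0)"
    using eventually_line_in_open[OF assms(1,2)] by eventually_elim (use assms(3) in auto)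
  show "has_pd i f x \<longleftrightarrow> has_pd i g x"
    unfolding has_pd_def field_differentiable_def using DERIV_cong_ev[OF refl ev refl] by blast
  show "pd i f x = pd i g x"
    unfolding pd_def using deriv_cong_ev[OF ev refl] .
qed

lemma
  assumes "has_pd i f x" "has_pd i g x"
  shows has_pd_lincomb: "has_pd i (\<lambda>y. f y + c * g y) x"
    and pd_lincomb: "pd i (\<lambda>y. f y + c * g y) x = pd i f x + c * pd i g x"
  using has_pd_pdI[OF DERIV_add[OF has_real_derivative_pd[OF assms(1)]
                               DERIV_cmult[OF has_real_derivative_pd[OF assms(2)]]]]
  by auto

lemma
  assumes "C2_on f S" "C2_on g S" "open S" "x \<in> S"
  shows has_pd2_lincomb: "has_pd j (pd i (\<lambda>y. f y + c * g y)) x"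
    and pd2_lincomb: "pd j (pd i (\<lambda>y. f y + c * g y)) x = pd j (pd i f) x + c * pd j (pd i g) x"
proof -
  have eq: "pd i (\<lambda>y. f y + c * g y) y = pd i f y + c * pd i g y" if "y \<in> S" for y
    using assms that by (simp add: C2_on_def pd_lincomb)
  have fg: "has_pd j (pd i f) x" "has_pd j (pd i g) x"
    using assms by (auto simp: C2_on_def)
  show "has_pd j (pd i (\<lambda>y. f y + c * g y)) x"
    using has_pd_cong[OF assms(3,4) eq] has_pd_lincomb[OF fg] by simp
  show "pd j (pd i (\<lambda>y. f y + c * g y)) x = pd j (pd i f) x + c * pd j (pd i g) x"
    using pd_cong[OF assms(3,4) eq] pd_lincomb[OF fg] by simp
qed

lemma C2_on_lincomb:
  assumes f: "C2_on f S" and g: "C2_on g S" and S: "open S"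
  shows "C2_on (\<lambda>y. f y + c * g y) S"
proof -
  have pd_eq: "pd i (\<lambda>y. f y + c * g y) y = pd i f y + c * pd i g y" if "y \<in> S" for i y
    using f g that by (simp add: C2_on_def pd_lincomb)
  have pd2_eq: "pd j (pd i (\<lambda>y. f y + c * g y)) y = pd j (pd i f) y + c * pd j (pd i g) y"
    if "y \<in> S" for i j y
    using pd2_lincomb[OF f g S that] .
  have "continuous_on S (pd i (\<lambda>y. f y + c * g y))" for i
    by (rule continuous_on_eq[OF _ pd_eq[symmetric]])
      (use f g in \<open>auto simp: C2_on_def intro!: continuous_intros\<close>)
  moreover have "continuous_on S (pd j (pd i (\<lambda>y. f y + c * g y)))" for i j
    by (rule continuous_on_eq[OF _ pd2_eq[symmetric]])
      (use f g in \<open>auto simp: C2_on_def intro!: continuous_intros\<close>)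
  moreover have "continuous_on S (\<lambda>y. f y + c * g y)"
    using f g by (auto simp: C2_on_def intro!: continuous_intros)
  moreover have "has_pd i (\<lambda>y. f y + c * g y) y" if "y \<in> S" for i y
    using f g that by (simp add: C2_on_def has_pd_lincomb)
  ultimately show ?thesis
    using has_pd2_lincomb[OF f g S] by (simp add: C2_on_def)
qed

lemma laplace_bessel_lincomb:
  assumes f: "C2_on f S" and g: "C2_on g S" and S: "open S" and x: "x \<in> S"
  shows "laplace_bessel K \<alpha> (\<lambda>y. f y + c * g y) x = laplace_bessel K \<alpha> f x + c * laplace_bessel K \<alpha> g x"
proof -
  have "pd k (\<lambda>y. f y + c * g y) x = pd k f x + c * pd k g x" for k
    using f g x by (simp add: C2_on_def pd_lincomb)
  then show ?thesis
    unfolding laplace_bessel_def pd2_lincomb[OF f g S x]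
    by (simp add: sum.distrib sum_distrib_left algebra_simps)
qed

lemma
  assumes "(h has_real_derivative D) (at (x $ j))"
  shows has_pd_comp_nth: "has_pd i (\<lambda>y. h (y $ j)) x"
    and pd_comp_nth: "pd i (\<lambda>y. h (y $ j)) x = D * unit_vec i $ j"
proof -
  have "((\<lambda>t. x $ j + t * unit_vec i $ j) has_real_derivative unit_vec i $ j) (at 0)"
    by (auto intro!: derivative_eq_intros)
  from DERIV_chain2[OF _ this] assms
  have "((\<lambda>t. h ((x + t *\<^sub>R unit_vec i) $ j)) has_real_derivative D * unit_vec i $ j) (at 0)"
    by simp
  then show "has_pd i (\<lambda>y. h (y $ j)) x" "pd i (\<lambda>y. h (y $ j)) x = D * unit_vec i $ j"
    by (rule has_pd_pdI)+
qed

lemma pd_nth_square: "pd i (\<lambda>y. (y $ j)\<^sup>2) = (\<lambda>y. 2 * y $ j * unit_vec i $ j)"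
proof
  fix y :: "real^'a"
  have "((\<lambda>s. s\<^sup>2) has_real_derivative 2 * y $ j) (at (y $ j))"
    by (auto intro!: derivative_eq_intros)
  then show "pd i (\<lambda>y. (y $ j)\<^sup>2) y = 2 * y $ j * unit_vec i $ j"
    by (rule pd_comp_nth)
qed

lemma pd2_nth_square: "pd k (pd i (\<lambda>y. (y $ j)\<^sup>2)) x = 2 * unit_vec i $ j * unit_vec k $ j"
proof -
  have "((\<lambda>s. 2 * s * unit_vec i $ j) has_real_derivative 2 * unit_vec i $ j) (at (x $ j))"
    by (auto intro!: derivative_eq_intros)
  then show ?thesis
    unfolding pd_nth_square by (rule pd_comp_nth)
qed

lemma C2_on_nth_square: "C2_on (\<lambda>y. (y $ j)\<^sup>2) S"
proof -
  have "has_pd i (\<lambda>y. (y $ j)\<^sup>2) x" for i x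
    by (rule has_pd_comp_nth[where D = "2 * x $ j"]) (auto intro!: derivative_eq_intros)
  moreover have "has_pd k (pd i (\<lambda>y. (y $ j)\<^sup>2)) x" for i k x
    unfolding pd_nth_square
    by (rule has_pd_comp_nth[where D = "2 * unit_vec i $ j"]) (auto intro!: derivative_eq_intros)
  moreover have "pd k (pd i (\<lambda>y. (y $ j)\<^sup>2)) = (\<lambda>x. 2 * unit_vec i $ j * unit_vec k $ j)" for i k
    by (rule ext) (rule pd2_nth_square)
  ultimately show ?thesis
    unfolding C2_on_def by (auto simp: pd_nth_square intro!: continuous_intros)
qed

lemma laplace_bessel_nth_square:
  assumes "\<forall>k\<in>K. 0 \<le> \<alpha> k"
  shows "2 \<le> laplace_bessel K \<alpha> (\<lambda>y. (y $ j)\<^sup>2) x"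
proof -
  have "(\<Sum>i\<in>UNIV. pd i (pd i (\<lambda>y. (y $ j)\<^sup>2)) x) = 2"
    by (simp add: pd2_nth_square unit_vec_nth if_distrib cong: if_cong)
  \<comment> \<open>Only k = j contributes: 4 \<alpha>_j, or 0 if x_j = 0 since division by 0 yields 0.
    So no positivity of x is needed.\<close>
  moreover have "0 \<le> (2 * \<alpha> k / x $ k) * pd k (\<lambda>y. (y $ j)\<^sup>2) x" if "k \<in> K" for k
    using assms that by (auto simp: pd_nth_square unit_vec_nth)
  ultimately show ?thesis
    by (simp add: laplace_bessel_def sum_nonneg)
qed

lemma regular_solution_lincomb:
  assumes "regular_solution K \<alpha> S f" "regular_solution K \<alpha> S g" "open S"
  shows "regular_solution K \<alpha> S (\<lambda>y. f y + c * g y)"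
  using assms laplace_bessel_lincomb[of f S g]
  by (simp add: regular_solution_iff C2_on_lincomb)

lemma DERIV_local_max_second_nonpos:
  fixes G G' :: "real \<Rightarrow> real"
  assumes d: "d > 0"
    and der: "\<And>s. \<bar>s\<bar> < d \<Longrightarrow> (G has_real_derivative G' s) (at s)"
    and der2: "(G' has_real_derivative c) (at 0)"
    and max: "\<And>s. \<bar>s\<bar> < d \<Longrightarrow> G s \<le> G 0"
  shows "c \<le> 0"
proof (rule ccontr)
  assume "\<not> c \<le> 0"
  then obtain e where e: "e > 0" "\<And>h. 0 < h \<Longrightarrow> h < e \<Longrightarrow> G' 0 < G' h"
    using DERIV_pos_inc_right[OF der2] by force
  have "G' 0 = 0"
    using DERIV_local_max[OF der[of 0] d] max d by auto
  define s where "s = min d e / 2"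
  have s: "0 < s" "s < d" "s < e"
    using d e by (auto simp: s_def)
  obtain z where z: "0 < z" "z < s" "G s - G 0 = s * G' z"
    using MVT2[of 0 s G G'] s der by force
  have "G' z > 0"
    using e(2)[of z] z s \<open>G' 0 = 0\<close> by simp
  with z s max[of s] show False
    by (smt (verit) mult_pos_pos)
qed

lemma
  assumes v: "C2_on v S" and S: "open S" "x \<in> S" and max: "\<forall>y\<in>S. v y \<le> v x"
  shows pd_eq_0_at_max: "pd i v x = 0"
    and pd2_nonpos_at_max: "pd i (pd i v) x \<le> 0"
proof -
  obtain r where r: "r > 0" "ball x r \<subseteq> S"
    using S open_contains_ball by blast
  have line: "x + s *\<^sub>R unit_vec i \<in> S" if "\<bar>s\<bar> < r" for s
    using r that by (auto simp: dist_norm unit_vec_def intro!: subsetD[OF r(2)])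
  have der: "((\<lambda>t. v (x + t *\<^sub>R unit_vec i)) has_real_derivative pd i v (x + s *\<^sub>R unit_vec i)) (at s)"
    if "\<bar>s\<bar> < r" for s
    using v line[OF that] by (auto simp: C2_on_def intro: has_real_derivative_pd_shift)
  have line_max: "v (x + s *\<^sub>R unit_vec i) \<le> v (x + 0 *\<^sub>R unit_vec i)" if "\<bar>s\<bar> < r" for s
    using max line[OF that] by simp
  show "pd i v x = 0"
    using DERIV_local_max[OF der[of 0] r(1)] line_max r(1) by (simp add: dist_real_def)
  have "((\<lambda>t. pd i v (x + t *\<^sub>R unit_vec i)) has_real_derivative pd i (pd i v) x) (at 0)"
    using v S by (auto simp: C2_on_def intro: has_real_derivative_pd)
  from DERIV_local_max_second_nonpos[OF r(1) der this line_max]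
  show "pd i (pd i v) x \<le> 0" .
qed

lemma laplace_bessel_nonpos_at_max:
  assumes "C2_on v S" "open S" "x \<in> S" "\<forall>y\<in>S. v y \<le> v x"
  shows "laplace_bessel K \<alpha> v x \<le> 0"
  using pd_eq_0_at_max[OF assms] pd2_nonpos_at_max[OF assms]
  by (simp add: laplace_bessel_def sum_nonpos)

lemma strict_subsolution_max_on_frontier:
  assumes \<Omega>: "open \<Omega>" "bounded \<Omega>" "\<Omega> \<noteq> {}"
    and v: "C2_on v \<Omega>" "continuous_on (closure \<Omega>) v" "\<forall>x\<in>\<Omega>. 0 < laplace_bessel K \<alpha> v x"
  shows "\<exists>x\<in>frontier \<Omega>. \<forall>y\<in>closure \<Omega>. v y \<le> v x"
proof -
  obtain x where x: "x \<in> closure \<Omega>" "\<forall>y\<in>closure \<Omega>. v y \<le> v x"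
    using continuous_attains_sup[OF compact_closure[THEN iffD2, OF \<Omega>(2)] _ v(2)] \<Omega>(3) by auto
  have "x \<notin> \<Omega>"
  proof
    assume "x \<in> \<Omega>"
    then have "laplace_bessel K \<alpha> v x \<le> 0"
      using laplace_bessel_nonpos_at_max[OF v(1) \<Omega>(1)] x(2) closure_subset by blast
    with v(3) \<open>x \<in> \<Omega>\<close> show False
      by fastforce
  qed
  with x \<Omega>(1) show ?thesis
    by (auto simp: frontier_def interior_open)
qed

lemma regular_solution_max_principle:
  fixes w :: "real^'m::finite \<Rightarrow> real"
  assumes \<Omega>: "open \<Omega>" "bounded \<Omega>" and \<alpha>: "\<forall>k\<in>K. 0 \<le> \<alpha> k"
    and w: "regular_solution K \<alpha> \<Omega> w" "continuous_on (closure \<Omega>) w"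
    and frontier_nonpos: "\<forall>x\<in>frontier \<Omega>. w x \<le> 0"
    and y: "y \<in> closure \<Omega>"
  shows "w y \<le> 0"
proof (rule field_le_epsilon)
  fix e :: real
  assume e: "e > 0"
  obtain j :: 'm where True by blast
  obtain R where R: "\<forall>z\<in>closure \<Omega>. norm z \<le> R"
    using \<Omega>(2) bounded_closure bounded_iff by blast
  have R2: "(z $ j)\<^sup>2 \<le> R\<^sup>2" if "z \<in> closure \<Omega>" for z
  proof -
    have "\<bar>z $ j\<bar> \<le> \<bar>R\<bar>"
      using R that component_le_norm_cart[of z j] by fastforce
    then show ?thesis
      by (simp add: abs_le_square_iff)
  qed
  define \<epsilon> where "\<epsilon> = e / (R\<^sup>2 + 1)"
  have \<epsilon>: "\<epsilon> > 0" "\<epsilon> * R\<^sup>2 \<le> e"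
    using e by (simp_all add: \<epsilon>_def add_nonneg_pos divide_le_eq)
  define v where "v = (\<lambda>z. w z + \<epsilon> * (z $ j)\<^sup>2)"
  have "C2_on v \<Omega>"
    using w(1) C2_on_lincomb[OF _ C2_on_nth_square \<Omega>(1)] by (simp add: v_def regular_solution_iff)
  moreover have "continuous_on (closure \<Omega>) v"
    unfolding v_def using w(2) by (intro continuous_intros)
  moreover have "0 < laplace_bessel K \<alpha> v x" if "x \<in> \<Omega>" for x
  proof -
    have "laplace_bessel K \<alpha> v x = \<epsilon> * laplace_bessel K \<alpha> (\<lambda>y. (y $ j)\<^sup>2) x"
      using w(1) laplace_bessel_lincomb[OF _ C2_on_nth_square \<Omega>(1) that] that
      by (simp add: v_def regular_solution_iff)
    moreover have "2 \<le> laplace_bessel K \<alpha> (\<lambda>y. (y $ j)\<^sup>2) x"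
      using laplace_bessel_nth_square[OF \<alpha>] .
    ultimately show ?thesis
      using \<epsilon>(1) by simp
  qed
  moreover have "\<Omega> \<noteq> {}"
    using y by auto
  ultimately obtain x where x: "x \<in> frontier \<Omega>" "\<forall>y\<in>closure \<Omega>. v y \<le> v x"
    using strict_subsolution_max_on_frontier[OF \<Omega>] by blast
  have "x \<in> closure \<Omega>"
    using x(1) by (simp add: frontier_def)
  have "w y \<le> v y"
    using \<epsilon>(1) by (simp add: v_def)
  also have "\<dots> \<le> v x"
    using x(2) y by blast
  also have "\<dots> \<le> \<epsilon> * R\<^sup>2"
  proof -
    have "\<epsilon> * (x $ j)\<^sup>2 \<le> \<epsilon> * R\<^sup>2"
      using R2[OF \<open>x \<in> closure \<Omega>\<close>] \<epsilon>(1) by simp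
    with frontier_nonpos x(1) show ?thesis
      by (fastforce simp: v_def)
  qed
  also have "\<dots> \<le> e"
    using \<epsilon>(2) .
  finally show "w y \<le> 0 + e"
    by simp
qed

lemma regular_solution_comparison:
  fixes f g :: "real^'m::finite \<Rightarrow> real"
  assumes \<Omega>: "open \<Omega>" "bounded \<Omega>" and \<alpha>: "\<forall>k\<in>K. 0 \<le> \<alpha> k"
    and f: "regular_solution K \<alpha> \<Omega> f" "continuous_on (closure \<Omega>) f"
    and g: "regular_solution K \<alpha> \<Omega> g" "continuous_on (closure \<Omega>) g"
    and frontier_le: "\<forall>x\<in>frontier \<Omega>. f x \<le> g x"
    and y: "y \<in> closure \<Omega>"
  shows "f y \<le> g y"
proof -
  have "regular_solution K \<alpha> \<Omega> (\<lambda>y. f y + (-1) * g y)"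
    using regular_solution_lincomb[OF f(1) g(1) \<Omega>(1)] .
  moreover have "continuous_on (closure \<Omega>) (\<lambda>y. f y + (-1) * g y)"
    using f(2) g(2) by (intro continuous_intros)
  moreover have "\<forall>x\<in>frontier \<Omega>. f x + (-1) * g x \<le> 0"
    using frontier_le by simp
  ultimately have "f y + (-1) * g y \<le> 0"
    using regular_solution_max_principle[OF \<Omega> \<alpha>] y by blast
  then show ?thesis
    by simp
qed

lemma regular_solution_unique:
  fixes u1 u2 :: "real^'m::finite \<Rightarrow> real"
  assumes \<Omega>: "open \<Omega>" "bounded \<Omega>" and \<alpha>: "\<forall>k\<in>K. 0 \<le> \<alpha> k"
    and u1: "regular_solution K \<alpha> \<Omega> u1" "continuous_on (closure \<Omega>) u1"
    and u2: "regular_solution K \<alpha> \<Omega> u2" "continuous_on (closure \<Omega>) u2"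
    and frontier_eq: "\<forall>x\<in>frontier \<Omega>. u1 x = u2 x"
  shows "\<forall>x\<in>closure \<Omega>. u1 x = u2 x"
  using regular_solution_comparison[OF \<Omega> \<alpha> u1 u2] regular_solution_comparison[OF \<Omega> \<alpha> u2 u1]
    frontier_eq by (simp add: order_antisym)

theorem theorem5:
  fixes K :: "'m::finite set" and \<alpha> :: "'m \<Rightarrow> real"
    and \<Omega> \<Gamma> :: "(real^'m) set" and \<Gamma>k :: "'m \<Rightarrow> (real^'m) set"
    and \<phi> :: "real^'m \<Rightarrow> real" and \<tau> :: "'m \<Rightarrow> real^'m \<Rightarrow> real"
    and u1 u2 :: "real^'m \<Rightarrow> real"
  assumes m: "CARD('m) > 2"
    and K: "K \<noteq> {}"
    and alpha: "\<forall>k\<in>K. 0 < 2 * \<alpha> k \<and> 2 * \<alpha> k < 1"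
    and dom: "open \<Omega>" "connected \<Omega>" "\<Omega> \<noteq> {}" "bounded \<Omega>" "\<Omega> \<subseteq> orthant K"
    and Gamma: "\<Gamma> = frontier \<Omega> \<inter> orthant K"
    and Gammak: "\<forall>k\<in>K. \<Gamma>k k = frontier \<Omega> \<inter> {x. x $ k = 0}"
    and bdry: "frontier \<Omega> \<subseteq> closure \<Gamma> \<union> (\<Union>k\<in>K. \<Gamma>k k)"
    and lyap: "lyapunov_surface K \<Gamma>"
    and phi: "continuous_on (closure \<Gamma>) \<phi>"
    and tau: "\<forall>k\<in>K. continuous_on (closure (\<Gamma>k k)) (\<tau> k)"
    and match: "\<forall>k\<in>K. \<forall>x\<in>closure \<Gamma> \<inter> closure (\<Gamma>k k). \<phi> x = \<tau> k x"
    and sol1: "regular_solution K \<alpha> \<Omega> u1" "continuous_on (closure \<Omega>) u1"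
    and sol2: "regular_solution K \<alpha> \<Omega> u2" "continuous_on (closure \<Omega>) u2"
    and bc1: "\<forall>x\<in>closure \<Gamma>. u1 x = \<phi> x" "\<forall>k\<in>K. \<forall>x\<in>closure (\<Gamma>k k). u1 x = \<tau> k x"
    and bc2: "\<forall>x\<in>closure \<Gamma>. u2 x = \<phi> x" "\<forall>k\<in>K. \<forall>x\<in>closure (\<Gamma>k k). u2 x = \<tau> k x"
  shows "\<forall>x\<in>closure \<Omega>. u1 x = u2 x"
proof -
  have \<alpha>_nonneg: "\<forall>k\<in>K. 0 \<le> \<alpha> k"
    using alpha by force
  have "\<forall>x\<in>frontier \<Omega>. u1 x = u2 x"
  proof
    fix x
    assume "x \<in> frontier \<Omega>"
    then consider "x \<in> closure \<Gamma>" | k where "k \<in> K" "x \<in> closure (\<Gamma>k k)"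
      using bdry closure_subset by blast
    then show "u1 x = u2 x"
      using bc1 bc2 by cases auto
  qed
  then show ?thesis
    using regular_solution_unique[OF dom(1,4) \<alpha>_nonneg sol1 sol2] by blast
qed

end
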